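(* Assume $w(C)=f(|C|)$ for all $C\in\mathcal I$, for some positive function $f$. Let $\mathcal I=\{C\subset[K]\setminus\mathcal Y_0:\ k_0\le|C|\le K_0\}$ for some $0\le k_0\le K_0\le K$ and a (possibly empty) excluded set $\mathcal Y_0\subset[K]$ with $\mathcal Y_0\ne[K]$. Then for every $x\in\mathcal X$ and all $0\le\mu_1<\mu_2$, $C^{\mu_1}(x)\subseteq C^{\mu_2}(x)$.
   Context: Classification setting: $\mathcal Y=[K]=\{1,\dots,K\}$, $\alpha\in(0,1)$. For each $x$ and $k\in[K]$, $\hat P(Y=k\mid X=x)$ is a fixed estimated class probability, and $\hat p_C(x)=\sum_{k\in C}\hat P(Y=k\mid X=x)$ for $C\subseteq[K]$. $\mathcal I$ is enumerated in a fixed lexicographic order. For $\mu\ge0$ let $\hat\ell_{x,C}(\mu)=w(C)\hat p_C(x)+\mu(\hat p_C(x)-(1-\alpha))$. $C^\mu(x)$ is a maximizer of $\hat\ell_{x,C}(\mu)$ over $C\in\mathcal I$, with ties broken in favor of the smallest weight $w(C)$ and then the smallest index in the ordering. *)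

theory Defs
  imports Complex_Main
begin

text \<open>Estimated probability mass of a label set: hat p_C(x) = sum over k in C of hat P(Y=k | X=x).
  Here p stands for the function k maps to hat P(Y=k | X=x) at a fixed x.\<close>
definition pC :: "(nat \<Rightarrow> real) \<Rightarrow> nat set \<Rightarrow> real" where
  "pC p C = (\<Sum>k\<in>C. p k)"

definition ell :: "(nat set \<Rightarrow> real) \<Rightarrow> (nat \<Rightarrow> real) \<Rightarrow> real \<Rightarrow> real \<Rightarrow> nat set \<Rightarrow> real" where
  "ell w p alpha mu C = w C * pC p C + mu * (pC p C - (1 - alpha))"

definition lex_less :: "nat set \<Rightarrow> nat set \<Rightarrow> bool" where
  "lex_less A B \<longleftrightarrow> (sorted_list_of_set A, sorted_list_of_set B) \<in> lexord {(a, b). a < b}"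

definition is_Cmu :: "nat set set \<Rightarrow> (nat set \<Rightarrow> real) \<Rightarrow> (nat \<Rightarrow> real) \<Rightarrow> real \<Rightarrow> real \<Rightarrow> nat set \<Rightarrow> bool" where
  "is_Cmu I w p alpha mu C \<longleftrightarrow> C \<in> I \<and>
     (\<forall>C'\<in>I. C' \<noteq> C \<longrightarrow>
        ell w p alpha mu C' < ell w p alpha mu C \<or>
        (ell w p alpha mu C' = ell w p alpha mu C \<and>
          (w C < w C' \<or> (w C = w C' \<and> lex_less C C'))))"

end

(* The size of the selected set is nondecreasing in mu.  Indeed, if |C1| > |C2|, padding C2
   with elements of C1 gives a set of the size, hence of the weight, of C1, and at fixed weight a
   maximizer maximizes the mass p_C; so p(C2) <= p(C1).  But ell(C1) - ell(C2) is affine in mu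
   with slope p(C1) - p(C2), nonnegative at mu1 and nonpositive at mu2, and with the tie-break
   this forces p(C1) < p(C2).
   Now let |C1| <= |C2|, a in C1 - C2 and b in C2 - C1.  Exchanging a and b preserves sizes,
   so optimality of C1 and of C2 gives p_b <= p_a and p_a <= p_b; after that the lexicographic
   tie-break is violated by the exchange that inserts the smaller of a and b. *)
theory Submission
  imports Defs
begin

lemma sorted_list_of_set_Un_less:
  fixes A B :: "'a::linorder set"
  assumes "finite A" "finite B" "\<forall>x\<in>A. \<forall>y\<in>B. x < y"
  shows "sorted_list_of_set (A \<union> B) = sorted_list_of_set A @ sorted_list_of_set B"
proof (rule sorted_distinct_set_unique)
  show "sorted (sorted_list_of_set A @ sorted_list_of_set B)"
    using assms by (auto simp: sorted_append less_imp_le)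
  show "distinct (sorted_list_of_set A @ sorted_list_of_set B)"
    using assms by auto
qed (use assms in auto)

lemma lex_less_asym: "lex_less A B \<Longrightarrow> \<not> lex_less B A"
  using lexord_asymmetric[of "{(a::nat, b). a < b}"] by (auto simp: lex_less_def asym_iff)

lemma lex_less_exchange_smaller:
  assumes "finite A" "a \<in> A" "b \<notin> A" "b < a"
  shows "lex_less (insert b (A - {a})) A"
proof -
  define L where "L = {x\<in>A. x < b}"
  define R where "R = {x\<in>A. b < x}"
  have fin: "finite L" "finite R" using assms by (auto simp: L_def R_def)
  have A: "A = L \<union> R" using assms(3) by (auto simp: L_def R_def) (metis linorder_cases)
  have "R \<noteq> {}" using assms by (auto simp: R_def)
  then have R: "R \<noteq> {}" "b < Min R" using Min_in[OF fin(2)] unfolding R_def by blast+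
  have "sorted_list_of_set A = sorted_list_of_set L @ Min R # sorted_list_of_set (R - {Min R})"
    unfolding A using fin R
    by (subst sorted_list_of_set_Un_less) (auto simp: L_def R_def sorted_list_of_set_nonempty)
  moreover have "sorted_list_of_set (insert b (A - {a}))
      = sorted_list_of_set L @ b # sorted_list_of_set (R - {a})"
  proof -
    have "Min (insert b (R - {a})) = b" "insert b (R - {a}) - {b} = R - {a}"
      using fin by (auto simp: R_def intro!: Min_eqI)
    then have "sorted_list_of_set (insert b (R - {a})) = b # sorted_list_of_set (R - {a})"
      using fin by (simp add: sorted_list_of_set_nonempty)
    moreover have "insert b (A - {a}) = L \<union> insert b (R - {a})"
      using assms by (auto simp: L_def R_def)
    moreover have "sorted_list_of_set (L \<union> insert b (R - {a}))
        = sorted_list_of_set L @ sorted_list_of_set (insert b (R - {a}))"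
      using fin by (intro sorted_list_of_set_Un_less) (auto simp: L_def R_def)
    ultimately show ?thesis by simp
  qed
  ultimately show ?thesis
    unfolding lex_less_def by (auto intro: lexord_append_left_rightI simp: R)
qed

lemma card_exchange:
  assumes "finite C" "a \<in> C" "b \<notin> C"
  shows "card (insert b (C - {a})) = card C"
proof -
  have "card C > 0" using assms card_gt_0_iff by blast
  then show ?thesis using assms by (simp add: card_Diff_singleton)
qed

lemma pC_exchange:
  assumes "finite C" "a \<in> C" "b \<notin> C"
  shows "pC p (insert b (C - {a})) = pC p C - p a + p b"
  using assms by (simp add: pC_def sum_diff1)

lemma is_Cmu_ell_le:
  "is_Cmu I w p alpha mu C \<Longrightarrow> D \<in> I \<Longrightarrow> ell w p alpha mu D \<le> ell w p alpha mu C"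
  unfolding is_Cmu_def by fastforce

lemma is_Cmu_tie:
  assumes "is_Cmu I w p alpha mu C" "D \<in> I" "D \<noteq> C" "ell w p alpha mu D = ell w p alpha mu C"
  shows "w C < w D \<or> (w C = w D \<and> lex_less C D)"
  using assms unfolding is_Cmu_def by fastforce

lemma is_Cmu_same_weight:
  assumes C: "is_Cmu I w p alpha mu C" and "D \<in> I" "w D = w C" "0 < w C + mu"
  shows "pC p D \<le> pC p C"
    and "pC p D = pC p C \<Longrightarrow> D \<noteq> C \<Longrightarrow> lex_less C D"
proof -
  have diff: "ell w p alpha mu D - ell w p alpha mu C = (w C + mu) * (pC p D - pC p C)"
    using \<open>w D = w C\<close> by (simp add: ell_def algebra_simps)
  then have "(w C + mu) * (pC p D - pC p C) \<le> 0"
    using is_Cmu_ell_le[OF C \<open>D \<in> I\<close>] by linarith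
  then show "pC p D \<le> pC p C"
    using \<open>0 < w C + mu\<close> by (simp add: mult_le_0_iff)
  show "lex_less C D" if "pC p D = pC p C" "D \<noteq> C"
    using is_Cmu_tie[OF C \<open>D \<in> I\<close> \<open>D \<noteq> C\<close>] diff that \<open>w D = w C\<close> by simp
qed

lemma is_Cmu_exchange:
  assumes C: "is_Cmu I w p alpha mu C" and "finite C" "a \<in> C" "b \<notin> C"
    and "insert b (C - {a}) \<in> I" "w (insert b (C - {a})) = w C" "0 < w C + mu"
  shows "p b < p a \<or> (p b = p a \<and> a < b)"
proof -
  let ?D = "insert b (C - {a})"
  note mass = is_Cmu_same_weight[OF C \<open>?D \<in> I\<close> \<open>w ?D = w C\<close> \<open>0 < w C + mu\<close>]
  have pD: "pC p ?D = pC p C - p a + p b" using pC_exchange assms(2-4) .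
  have "p b \<le> p a" using mass(1) pD by linarith
  moreover have "a < b" if "p b = p a"
  proof -
    have "?D \<noteq> C" using \<open>b \<notin> C\<close> by blast
    then have "lex_less C ?D" using mass(2) pD that by simp
    then have "\<not> b < a"
      using lex_less_exchange_smaller[OF \<open>finite C\<close> \<open>a \<in> C\<close> \<open>b \<notin> C\<close>] lex_less_asym by blast
    moreover have "a \<noteq> b" using assms(3,4) by blast
    ultimately show "a < b" by simp
  qed
  ultimately show ?thesis by fastforce
qed

lemma is_Cmu_pC_less:
  assumes C1: "is_Cmu I w p alpha mu1 C1" and C2: "is_Cmu I w p alpha mu2 C2"
    and "mu1 < mu2" "C1 \<noteq> C2"
  shows "pC p C1 < pC p C2"
proof (rule ccontr)
  assume "\<not> ?thesis"
  then have mass: "pC p C2 \<le> pC p C1" by simp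
  define d where "d mu = ell w p alpha mu C1 - ell w p alpha mu C2" for mu
  have C1I: "C1 \<in> I" and C2I: "C2 \<in> I" using C1 C2 by (auto simp: is_Cmu_def)
  have "d mu2 - d mu1 = (mu2 - mu1) * (pC p C1 - pC p C2)"
    by (simp add: d_def ell_def algebra_simps)
  moreover have "0 \<le> (mu2 - mu1) * (pC p C1 - pC p C2)"
    using mass \<open>mu1 < mu2\<close> by simp
  moreover have "0 \<le> d mu1" "d mu2 \<le> 0"
    using is_Cmu_ell_le[OF C1 C2I] is_Cmu_ell_le[OF C2 C1I] by (auto simp: d_def)
  ultimately have "d mu1 = 0" "d mu2 = 0" by linarith+
  then have "w C1 < w C2 \<or> (w C1 = w C2 \<and> lex_less C1 C2)"
    and "w C2 < w C1 \<or> (w C2 = w C1 \<and> lex_less C2 C1)"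
    using is_Cmu_tie[OF C1 C2I] is_Cmu_tie[OF C2 C1I] \<open>C1 \<noteq> C2\<close> by (auto simp: d_def)
  then show False using lex_less_asym by force
qed

lemma obtain_superset_within_Un_with_card:
  assumes "finite A" "finite B" "card B \<le> card A"
  obtains E where "B \<subseteq> E" "E \<subseteq> A \<union> B" "card E = card A"
proof -
  have "card A - card B \<le> card (A - B)" by (rule diff_card_le_card_Diff) fact
  then obtain X where X: "X \<subseteq> A - B" "card X = card A - card B"
    using obtain_subset_with_card_n by metis
  then have "card (B \<union> X) = card A"
    using assms finite_subset[of X A] by (subst card_Un_disjoint) auto
  then show ?thesis using that X by blast
qed

lemma is_Cmu_subset_if_card_le:
  assumes I: "I = {C. C \<subseteq> S \<and> P (card C)}" and "finite S"
    and w: "\<forall>C\<in>I. w C = f (card C)" and f: "\<forall>n. 0 < f n"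
    and "0 \<le> mu1" "0 \<le> mu2"
    and C1: "is_Cmu I w p alpha mu1 C1" and C2: "is_Cmu I w p alpha mu2 C2"
    and "card C1 \<le> card C2"
  shows "C1 \<subseteq> C2"
proof (rule ccontr)
  assume "\<not> C1 \<subseteq> C2"
  then obtain a where a: "a \<in> C1" "a \<notin> C2" by blast
  have "C1 \<in> I" "C2 \<in> I" using C1 C2 by (auto simp: is_Cmu_def)
  then have C12: "C1 \<subseteq> S" "C2 \<subseteq> S" by (auto simp: I)
  then have "finite C1" "finite C2" using \<open>finite S\<close> by (auto intro: finite_subset)
  have "\<not> C2 \<subseteq> C1"
  proof
    assume "C2 \<subseteq> C1"
    moreover have "card C2 = card C1"
      using card_mono[OF \<open>finite C1\<close> \<open>C2 \<subseteq> C1\<close>] \<open>card C1 \<le> card C2\<close> by linarith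
    ultimately have "C2 = C1" by (rule card_subset_eq[OF \<open>finite C1\<close>])
    then show False using a by blast
  qed
  then obtain b where b: "b \<in> C2" "b \<notin> C1" by blast
  have exchange_in_I: "insert v (C - {u}) \<in> I \<and> w (insert v (C - {u})) = w C"
    if "C \<in> I" "u \<in> C" "v \<in> S - C" for C u v
  proof -
    have "C \<subseteq> S" "P (card C)" using \<open>C \<in> I\<close> by (simp_all add: I)
    then have "card (insert v (C - {u})) = card C"
      using card_exchange[OF finite_subset[OF \<open>C \<subseteq> S\<close> \<open>finite S\<close>] that(2)] that(3) by simp
    moreover have "insert v (C - {u}) \<subseteq> S" using \<open>C \<subseteq> S\<close> that(3) by blast
    ultimately have "insert v (C - {u}) \<in> I" using \<open>P (card C)\<close> by (simp add: I)
    then show ?thesis using w \<open>C \<in> I\<close> \<open>card (insert v (C - {u})) = card C\<close> by simp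
  qed
  have weight_pos: "0 < w C + mu" if "C \<in> I" "0 \<le> mu" for C mu
    using that w f by (simp add: add_pos_nonneg)
  have "p b < p a \<or> (p b = p a \<and> a < b)"
    using is_Cmu_exchange[OF C1 \<open>finite C1\<close> a(1) b(2)] exchange_in_I[OF \<open>C1 \<in> I\<close> a(1)]
      weight_pos[OF \<open>C1 \<in> I\<close> \<open>0 \<le> mu1\<close>] b(1) b(2) C12 by blast
  moreover have "p a < p b \<or> (p a = p b \<and> b < a)"
    using is_Cmu_exchange[OF C2 \<open>finite C2\<close> b(1) a(2)] exchange_in_I[OF \<open>C2 \<in> I\<close> b(1)]
      weight_pos[OF \<open>C2 \<in> I\<close> \<open>0 \<le> mu2\<close>] a(1) a(2) C12 by blast
  ultimately show False by linarith
qed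

lemma is_Cmu_card_mono:
  assumes I: "I = {C. C \<subseteq> S \<and> P (card C)}" and "finite S"
    and w: "\<forall>C\<in>I. w C = f (card C)" and f: "\<forall>n. 0 < f n"
    and p: "\<forall>k\<in>S. 0 \<le> p k" and "0 \<le> mu1" "mu1 < mu2"
    and C1: "is_Cmu I w p alpha mu1 C1" and C2: "is_Cmu I w p alpha mu2 C2"
  shows "card C1 \<le> card C2"
proof (rule ccontr)
  assume "\<not> card C1 \<le> card C2"
  have "C1 \<in> I" "C2 \<in> I" using C1 C2 by (auto simp: is_Cmu_def)
  then have C12: "C1 \<subseteq> S" "C2 \<subseteq> S" by (auto simp: I)
  then have "finite C1" "finite C2" using \<open>finite S\<close> by (auto intro: finite_subset)
  obtain E where E: "C2 \<subseteq> E" "E \<subseteq> C1 \<union> C2" "card E = card C1"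
    using obtain_superset_within_Un_with_card[OF \<open>finite C1\<close> \<open>finite C2\<close>] \<open>\<not> card C1 \<le> card C2\<close> by force
  have "E \<subseteq> S" using E C12 by blast
  then have "E \<in> I" using E(3) \<open>C1 \<in> I\<close> by (simp add: I)
  then have "w E = w C1" using E(3) \<open>C1 \<in> I\<close> w by simp
  have "pC p C2 \<le> pC p E"
    unfolding pC_def
    using E C12 p finite_subset[OF E(2)] \<open>finite C1\<close> \<open>finite C2\<close>
    by (intro sum_mono2) (auto simp: subset_iff)
  also have "\<dots> \<le> pC p C1"
    using is_Cmu_same_weight(1)[OF C1 \<open>E \<in> I\<close> \<open>w E = w C1\<close>] f w \<open>C1 \<in> I\<close> \<open>0 \<le> mu1\<close>
    by (simp add: add_pos_nonneg)
  finally have "pC p C2 \<le> pC p C1" .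
  moreover have "C1 \<noteq> C2" using \<open>\<not> card C1 \<le> card C2\<close> by blast
  ultimately show False
    using is_Cmu_pC_less[OF C1 C2 \<open>mu1 < mu2\<close>] by linarith
qed

theorem proposition12:
  fixes K k0 K0 :: nat and Y0 :: "nat set" and f :: "nat \<Rightarrow> real"
    and w :: "nat set \<Rightarrow> real" and phat :: "'x \<Rightarrow> nat \<Rightarrow> real"
    and alpha :: real and x :: 'x and mu1 mu2 :: real and C1 C2 :: "nat set"
  defines "I \<equiv> {C. C \<subseteq> {1..K} - Y0 \<and> k0 \<le> card C \<and> card C \<le> K0}"
  assumes "0 < alpha" and "alpha < 1"
    and "\<forall>x. \<forall>k\<in>{1..K}. 0 \<le> phat x k"
    and "\<forall>x. (\<Sum>k\<in>{1..K}. phat x k) = 1"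
    and "k0 \<le> K0" and "K0 \<le> K"
    and "Y0 \<subseteq> {1..K}" and "Y0 \<noteq> {1..K}"
    and "\<forall>n. 0 < f n"
    and "\<forall>C\<in>I. w C = f (card C)"
    and "0 \<le> mu1" and "mu1 < mu2"
    and "is_Cmu I w (phat x) alpha mu1 C1"
    and "is_Cmu I w (phat x) alpha mu2 C2"
  shows "C1 \<subseteq> C2"
proof -
  have I: "I = {C. C \<subseteq> {1..K} - Y0 \<and> k0 \<le> card C \<and> card C \<le> K0}"
    unfolding I_def ..
  have fin: "finite ({1..K} - Y0)" and nonneg: "\<forall>k\<in>{1..K} - Y0. 0 \<le> phat x k"
    using assms(4) by auto
  have "0 \<le> mu2" using assms(12,13) by linarith
  have "card C1 \<le> card C2"
    by (rule is_Cmu_card_mono[OF I fin assms(11,10) nonneg assms(12-15)])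
  then show ?thesis
    by (rule is_Cmu_subset_if_card_le[OF I fin assms(11,10) assms(12) \<open>0 \<le> mu2\<close> assms(14,15)])
qed

end
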